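(* Let $G$ be a $2$-permutable graph. Then $\chi_i(G\,\square\,K_2)=\Delta(G\,\square\,K_2)+1$.
   Context: All graphs are finite and simple. $K^-_{2n}$ is the complete graph on $2n$ vertices with a perfect matching removed. A homomorphism $f:G\to H$ is a map $V(G)\to V(H)$ with $f(u)f(v)\in E(H)$ whenever $uv\in E(G)$; it is locally injective if for every vertex $v$, $f$ is injective on $N(v)$. A connected $2d$-regular graph $G$ is $2$-permutable if it admits a locally injective homomorphism to $K^-_{2d+2}$. An incidence of $G$ is a pair $(v,e)$ with $v\in e\in E(G)$; incidences $(v,e),(u,f)$ are adjacent if $v=u$, or $e=f$, or $vu\in\{e,f\}$; an incidence coloring gives adjacent incidences distinct colors; $\chi_i(G)$ is the least number of colors of an incidence coloring. $\Delta$ denotes maximum degree. $G\,\square\,H$ is the Cartesian product: vertex set $V(G)\times V(H)$, $(u,v)\sim(u',v')$ iff ($uu'\in E(G)$, $v=v'$) or ($u=u'$, $vv'\in E(H)$). *)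

theory Defs
  imports Main
begin

definition simple_graph :: "'a set \<Rightarrow> 'a set set \<Rightarrow> bool" where
  "simple_graph V E \<longleftrightarrow> finite V \<and> (\<forall>e\<in>E. e \<subseteq> V \<and> card e = 2)"

definition nbhd :: "'a set \<Rightarrow> 'a set set \<Rightarrow> 'a \<Rightarrow> 'a set" where
  "nbhd V E v = {u \<in> V. {u, v} \<in> E}"

definition degree :: "'a set \<Rightarrow> 'a set set \<Rightarrow> 'a \<Rightarrow> nat" where
  "degree V E v = card (nbhd V E v)"

definition max_degree :: "'a set \<Rightarrow> 'a set set \<Rightarrow> nat" where
  "max_degree V E = Max (degree V E ` V)"

definition regular :: "'a set \<Rightarrow> 'a set set \<Rightarrow> nat \<Rightarrow> bool" where
  "regular V E k \<longleftrightarrow> (\<forall>v\<in>V. degree V E v = k)"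

definition connected_graph :: "'a set \<Rightarrow> 'a set set \<Rightarrow> bool" where
  "connected_graph V E \<longleftrightarrow> V \<noteq> {} \<and>
     (\<forall>u\<in>V. \<forall>v\<in>V. (u, v) \<in> {(x, y). {x, y} \<in> E}\<^sup>*)"

definition graph_hom :: "'a set \<Rightarrow> 'a set set \<Rightarrow> 'b set \<Rightarrow> 'b set set \<Rightarrow> ('a \<Rightarrow> 'b) \<Rightarrow> bool" where
  "graph_hom V E W F f \<longleftrightarrow> f ` V \<subseteq> W \<and> (\<forall>u\<in>V. \<forall>v\<in>V. {u, v} \<in> E \<longrightarrow> {f u, f v} \<in> F)"

definition locally_injective_hom ::
  "'a set \<Rightarrow> 'a set set \<Rightarrow> 'b set \<Rightarrow> 'b set set \<Rightarrow> ('a \<Rightarrow> 'b) \<Rightarrow> bool" where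
  "locally_injective_hom V E W F f \<longleftrightarrow>
     graph_hom V E W F f \<and> (\<forall>v\<in>V. inj_on f (nbhd V E v))"

text \<open>K^-_{2n}: vertices 0..2n-1, perfect matching {2k,2k+1} removed.\<close>
definition K_minus_V :: "nat \<Rightarrow> nat set" where
  "K_minus_V n = {..<2 * n}"

definition K_minus_E :: "nat \<Rightarrow> nat set set" where
  "K_minus_E n = {{i, j} | i j. i < 2 * n \<and> j < 2 * n \<and> i \<noteq> j \<and> i div 2 \<noteq> j div 2}"

definition two_permutable :: "'a set \<Rightarrow> 'a set set \<Rightarrow> bool" where
  "two_permutable V E \<longleftrightarrow> connected_graph V E \<and>
     (\<exists>d. regular V E (2 * d) \<and>
          (\<exists>f. locally_injective_hom V E (K_minus_V (d + 1)) (K_minus_E (d + 1)) f))"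

definition incidences :: "'a set set \<Rightarrow> ('a \<times> 'a set) set" where
  "incidences E = {(v, e). e \<in> E \<and> v \<in> e}"

definition inc_adj :: "'a \<times> 'a set \<Rightarrow> 'a \<times> 'a set \<Rightarrow> bool" where
  "inc_adj i j \<longleftrightarrow> (case i of (v, e) \<Rightarrow> case j of (u, f) \<Rightarrow>
      v = u \<or> e = f \<or> {v, u} = e \<or> {v, u} = f)"

definition incidence_coloring :: "'a set set \<Rightarrow> ('a \<times> 'a set \<Rightarrow> nat) \<Rightarrow> nat \<Rightarrow> bool" where
  "incidence_coloring E c k \<longleftrightarrow>
     c ` incidences E \<subseteq> {..<k} \<and>
     (\<forall>i\<in>incidences E. \<forall>j\<in>incidences E. i \<noteq> j \<and> inc_adj i j \<longrightarrow> c i \<noteq> c j)"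

definition incidence_chromatic :: "'a set set \<Rightarrow> nat" where
  "incidence_chromatic E = (LEAST k. \<exists>c. incidence_coloring E c k)"

definition box_V :: "'a set \<Rightarrow> 'b set \<Rightarrow> ('a \<times> 'b) set" where
  "box_V V1 V2 = V1 \<times> V2"

definition box_E :: "'a set \<Rightarrow> 'a set set \<Rightarrow> 'b set \<Rightarrow> 'b set set \<Rightarrow> ('a \<times> 'b) set set" where
  "box_E V1 E1 V2 E2 =
     {{(u, v), (u', v)} | u u' v. {u, u'} \<in> E1 \<and> v \<in> V2} \<union>
     {{(u, v), (u, v')} | u v v'. u \<in> V1 \<and> {v, v'} \<in> E2}"

definition K2_V :: "nat set" where "K2_V = {0, 1}"
definition K2_E :: "nat set set" where "K2_E = {{0, 1}}"

end

theory Submission imports Defs begin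

text \<open>Every incidence colouring needs \<open>\<Delta> + 1\<close> colours: at a vertex \<open>x\<close> of maximum degree the
  incidences \<open>(x, xu)\<close> together with one incidence \<open>(y, xy)\<close> are pairwise adjacent.
  Conversely, a colouring \<open>g\<close> of the vertices in which vertices at distance one or two get
  distinct colours yields the incidence colouring \<open>(x, xu) \<mapsto> g u\<close>. For \<open>G \<box> K\<^sub>2\<close> with
  \<open>G\<close> \<open>2d\<close>-regular, such a colouring with \<open>2d + 2 = \<Delta> + 1\<close> colours is obtained from the locally
  injective homomorphism \<open>f : G \<rightarrow> K\<^sup>-\<^sub>2\<^sub>d\<^sub>+\<^sub>2\<close>: colour the first copy of \<open>G\<close> by \<open>f\<close> and the second
  by \<open>f\<close> followed by the involution swapping the two ends of each removed matching edge.\<close>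

lemma simple_graph_edge_obtain:
  assumes "simple_graph V E" and "e \<in> E" and "v \<in> e"
  obtains u where "e = {v, u}" "u \<noteq> v" "u \<in> V" "v \<in> V"
proof -
  have "e \<subseteq> V" "card e = 2" using assms by (auto simp: simple_graph_def)
  then obtain a b where "e = {a, b}" "a \<noteq> b" by (auto simp: card_2_iff)
  then show thesis using that \<open>e \<subseteq> V\<close> \<open>v \<in> e\<close> by (auto simp: insert_commute)
qed

lemma incidences_obtain:
  assumes "simple_graph V E" and "i \<in> incidences E"
  obtains v u where "i = (v, {v, u})" "{v, u} \<in> E" "u \<noteq> v" "u \<in> V" "v \<in> V"
proof -
  obtain v e where "i = (v, e)" "e \<in> E" "v \<in> e" using assms(2) by (auto simp: incidences_def)
  then show thesis using that by (auto elim: simple_graph_edge_obtain[OF assms(1)])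
qed

lemma simple_graph_no_loop: "simple_graph V E \<Longrightarrow> {v} \<notin> E"
  by (auto simp: simple_graph_def)

lemma nbhd_finite: "simple_graph V E \<Longrightarrow> finite (nbhd V E v)"
  by (simp add: simple_graph_def nbhd_def)

lemma nbhd_not_self: "simple_graph V E \<Longrightarrow> v \<notin> nbhd V E v"
  by (simp add: nbhd_def simple_graph_no_loop)

lemma max_degree_regular:
  assumes "V \<noteq> {}" and "regular V E k"
  shows "max_degree V E = k"
proof -
  have "degree V E ` V = {k}" using assms by (auto simp: regular_def)
  then show ?thesis by (simp add: max_degree_def)
qed

lemma incidence_coloring_degree_bound:
  assumes sg: "simple_graph V E" and x: "x \<in> V" and y: "y \<in> nbhd V E x"
    and col: "incidence_coloring E c k"
  shows "degree V E x + 1 \<le> k"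
proof -
  let ?N = "nbhd V E x"
  let ?S = "insert (y, {x, y}) ((\<lambda>u. (x, {x, u})) ` ?N)"
  have ne: "u \<noteq> x" if "u \<in> ?N" for u using that nbhd_not_self[OF sg] by auto
  have sub: "?S \<subseteq> incidences E" using y by (auto simp: incidences_def nbhd_def insert_commute)
  have "inj_on (\<lambda>u. (x, {x, u})) ?N"
    by (rule inj_onI) (use ne in \<open>auto simp: doubleton_eq_iff\<close>)
  moreover have "(y, {x, y}) \<notin> (\<lambda>u. (x, {x, u})) ` ?N" using ne[OF y] by auto
  ultimately have card_S: "card ?S = degree V E x + 1"
    using nbhd_finite[OF sg] by (simp add: card_image degree_def)
  have range: "c ` incidences E \<subseteq> {..<k}"
    and distinct: "\<And>i j. i \<in> incidences E \<Longrightarrow> j \<in> incidences E \<Longrightarrow> i \<noteq> j \<Longrightarrow> inc_adj i j \<Longrightarrow> c i \<noteq> c j"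
    using col by (simp_all add: incidence_coloring_def)
  have inj: "inj_on c ?S"
  proof (rule inj_onI, rule ccontr)
    fix a b assume "a \<in> ?S" "b \<in> ?S" "c a = c b" "a \<noteq> b"
    moreover have "inc_adj a b" using \<open>a \<in> ?S\<close> \<open>b \<in> ?S\<close> by (auto simp: inc_adj_def)
    ultimately show False using distinct sub by blast
  qed
  have "degree V E x + 1 = card (c ` ?S)" using card_S card_image[OF inj] by simp
  also have "\<dots> \<le> card {..<k}" using range sub by (intro card_mono) auto
  finally show ?thesis by simp
qed

definition two_distance_coloring :: "'a set \<Rightarrow> 'a set set \<Rightarrow> ('a \<Rightarrow> nat) \<Rightarrow> nat \<Rightarrow> bool" where
  "two_distance_coloring V E g k \<longleftrightarrow> g ` V \<subseteq> {..<k} \<and>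
     (\<forall>u\<in>V. \<forall>v\<in>V. {u, v} \<in> E \<longrightarrow> g u \<noteq> g v) \<and> (\<forall>v\<in>V. inj_on g (nbhd V E v))"

definition incidence_coloring_of :: "('a \<Rightarrow> nat) \<Rightarrow> 'a \<times> 'a set \<Rightarrow> nat" where
  "incidence_coloring_of g = (\<lambda>(x, e). g (the_elem (e - {x})))"

lemma incidence_coloring_of_edge: "u \<noteq> v \<Longrightarrow> incidence_coloring_of g (v, {v, u}) = g u"
  by (auto simp: incidence_coloring_of_def)

lemma incidence_coloring_of_two_distance_coloring:
  assumes sg: "simple_graph V E" and g: "two_distance_coloring V E g k"
  shows "incidence_coloring E (incidence_coloring_of g) k"
  unfolding incidence_coloring_def
proof (intro conjI ballI impI)
  show "incidence_coloring_of g ` incidences E \<subseteq> {..<k}"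
  proof (rule image_subsetI)
    fix i assume "i \<in> incidences E"
    then obtain v u where "i = (v, {v, u})" "u \<noteq> v" "u \<in> V"
      by (rule incidences_obtain[OF sg])
    then show "incidence_coloring_of g i \<in> {..<k}"
      using g by (auto simp: two_distance_coloring_def incidence_coloring_of_edge)
  qed
next
  fix i j assume i: "i \<in> incidences E" and j: "j \<in> incidences E" and ij: "i \<noteq> j \<and> inc_adj i j"
  obtain v u where vu: "i = (v, {v, u})" "{v, u} \<in> E" "u \<noteq> v" "u \<in> V" "v \<in> V"
    using i by (rule incidences_obtain[OF sg])
  obtain w z where wz: "j = (w, {w, z})" "{w, z} \<in> E" "z \<noteq> w" "z \<in> V" "w \<in> V"
    using j by (rule incidences_obtain[OF sg])
  have proper: "\<And>a b. a \<in> V \<Longrightarrow> b \<in> V \<Longrightarrow> {a, b} \<in> E \<Longrightarrow> g a \<noteq> g b"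
    and inj: "\<And>a. a \<in> V \<Longrightarrow> inj_on g (nbhd V E a)"
    using g by (auto simp: two_distance_coloring_def)
  have "g u \<noteq> g z"
  proof (cases "v = w")
    case True
    then have "u \<noteq> z" using ij vu wz by auto
    moreover have "u \<in> nbhd V E v" "z \<in> nbhd V E v"
      using vu wz True by (auto simp: nbhd_def insert_commute)
    ultimately show ?thesis using inj[OF \<open>v \<in> V\<close>] by (auto dest: inj_onD)
  next
    case False
    then have "(w = u \<and> z = v) \<or> w = u \<or> z = v"
      using ij vu wz by (auto simp: inc_adj_def doubleton_eq_iff)
    then show ?thesis using proper vu wz by (metis insert_commute)
  qed
  then show "incidence_coloring_of g i \<noteq> incidence_coloring_of g j"
    using vu wz by (simp add: incidence_coloring_of_edge)
qed

lemma incidence_chromatic_eqI: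
  assumes "incidence_coloring E c k" and "\<And>c' k'. incidence_coloring E c' k' \<Longrightarrow> k \<le> k'"
  shows "incidence_chromatic E = k"
  unfolding incidence_chromatic_def by (rule Least_equality) (use assms in blast)+

lemma box_K2_V_iff: "(u, j) \<in> box_V V K2_V \<longleftrightarrow> u \<in> V \<and> j \<in> {0, 1}"
  by (simp add: box_V_def K2_V_def)

lemma box_K2_E_cases:
  assumes "X \<in> box_E V E K2_V K2_E"
  obtains (layer) a a' b where "X = {(a, b), (a', b)}" "{a, a'} \<in> E" "b \<in> {0, 1}"
    | (rung) a where "X = {(a, 0), (a, 1)}" "a \<in> V"
  using assms unfolding box_E_def K2_V_def K2_E_def
  by (auto simp: doubleton_eq_iff insert_commute)

lemma box_K2_edge_iff:
  assumes "simple_graph V E"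
  shows "{(v, i), (u, j)} \<in> box_E V E K2_V K2_E \<longleftrightarrow>
     (i = j \<and> {v, u} \<in> E \<and> i \<in> {0, 1}) \<or> (v = u \<and> v \<in> V \<and> {i, j} = {0, 1})"
proof (rule iffI)
  assume "{(v, i), (u, j)} \<in> box_E V E K2_V K2_E"
  then show "(i = j \<and> {v, u} \<in> E \<and> i \<in> {0, 1}) \<or> (v = u \<and> v \<in> V \<and> {i, j} = {0, 1})"
    by (cases rule: box_K2_E_cases) (auto simp: doubleton_eq_iff insert_commute)
next
  assume "(i = j \<and> {v, u} \<in> E \<and> i \<in> {0, 1}) \<or> (v = u \<and> v \<in> V \<and> {i, j} = {0, 1})"
  then show "{(v, i), (u, j)} \<in> box_E V E K2_V K2_E"
    unfolding box_E_def K2_V_def K2_E_def by blast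
qed

lemma simple_graph_box_K2:
  assumes sg: "simple_graph V E"
  shows "simple_graph (box_V V K2_V) (box_E V E K2_V K2_E)"
proof -
  have "X \<subseteq> box_V V K2_V \<and> card X = 2" if "X \<in> box_E V E K2_V K2_E" for X
    using that
  proof (cases rule: box_K2_E_cases)
    case (layer a a' b)
    then obtain u where "{a, a'} = {a, u}" "u \<noteq> a" "u \<in> V" "a \<in> V"
      by (auto elim: simple_graph_edge_obtain[OF sg])
    then show ?thesis using layer by (auto simp: box_K2_V_iff doubleton_eq_iff)
  qed (auto simp: box_K2_V_iff)
  moreover have "finite (box_V V K2_V)"
    using sg by (simp add: simple_graph_def box_V_def K2_V_def)
  ultimately show ?thesis by (simp add: simple_graph_def)
qed

lemma nbhd_box_K2:
  assumes sg: "simple_graph V E" and "v \<in> V" and "i \<in> {0, 1}"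
  shows "nbhd (box_V V K2_V) (box_E V E K2_V K2_E) (v, i)
           = insert (v, 1 - i) ((\<lambda>u. (u, i)) ` nbhd V E v)"
proof -
  have "u \<in> V" if "{u, v} \<in> E" for u
    using that sg by (auto simp: simple_graph_def)
  then show ?thesis
    using assms unfolding nbhd_def
    by (auto simp: box_K2_V_iff box_K2_edge_iff[OF sg] doubleton_eq_iff)
qed

lemma degree_box_K2:
  assumes sg: "simple_graph V E" and "v \<in> V" and "i \<in> {0, 1}"
  shows "degree (box_V V K2_V) (box_E V E K2_V K2_E) (v, i) = degree V E v + 1"
proof -
  have "inj_on (\<lambda>u. (u, i)) (nbhd V E v)" by (rule inj_onI) simp
  moreover have "(v, 1 - i) \<notin> (\<lambda>u. (u, i)) ` nbhd V E v" using nbhd_not_self[OF sg] by auto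
  ultimately show ?thesis
    unfolding degree_def nbhd_box_K2[OF assms] using nbhd_finite[OF sg] by (simp add: card_image)
qed

lemma regular_box_K2:
  assumes "simple_graph V E" and "regular V E k"
  shows "regular (box_V V K2_V) (box_E V E K2_V K2_E) (k + 1)"
  unfolding regular_def
proof
  fix x assume "x \<in> box_V V K2_V"
  then obtain v i where "x = (v, i)" "v \<in> V" "i \<in> {0, 1}" by (auto simp: box_V_def K2_V_def)
  then show "degree (box_V V K2_V) (box_E V E K2_V K2_E) x = k + 1"
    using assms(2) degree_box_K2[OF assms(1)] by (simp add: regular_def)
qed

text \<open>The other end of the matching edge \<open>{2k, 2k + 1}\<close> missing from \<open>K\<^sup>-\<^sub>2\<^sub>n\<close>.\<close>

definition mate :: "nat \<Rightarrow> nat" where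
  "mate n = (if even n then n + 1 else n - 1)"

lemma mate_div_2 [simp]: "mate n div 2 = n div 2"
  unfolding mate_def by (auto elim!: evenE oddE)

lemma mate_neq: "mate n \<noteq> n"
  unfolding mate_def by (auto elim!: oddE)

lemma mate_mate [simp]: "mate (mate n) = n"
  unfolding mate_def by (auto elim!: evenE oddE)

lemma mate_less_iff [simp]: "mate n < 2 * m \<longleftrightarrow> n < 2 * m"
  unfolding mate_def by (auto elim!: evenE oddE)

lemma K_minus_E_div_2: "{a, b} \<in> K_minus_E n \<Longrightarrow> a div 2 \<noteq> b div 2"
  by (auto simp: K_minus_E_def doubleton_eq_iff)

definition prism_coloring :: "('a \<Rightarrow> nat) \<Rightarrow> 'a \<times> nat \<Rightarrow> nat" where
  "prism_coloring f = (\<lambda>(v, i). if i = 0 then f v else mate (f v))"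

lemma prism_coloring_div_2 [simp]: "prism_coloring f (v, i) div 2 = f v div 2"
  by (simp add: prism_coloring_def)

lemma two_distance_coloring_prism:
  assumes sg: "simple_graph V E"
    and f: "locally_injective_hom V E (K_minus_V n) (K_minus_E n) f"
  shows "two_distance_coloring (box_V V K2_V) (box_E V E K2_V K2_E) (prism_coloring f) (2 * n)"
proof -
  have range: "f v < 2 * n" if "v \<in> V" for v
    using f that by (auto simp: locally_injective_hom_def graph_hom_def K_minus_V_def)
  have hom: "f u div 2 \<noteq> f v div 2" if "u \<in> V" "v \<in> V" "{u, v} \<in> E" for u v
  proof -
    have "{f u, f v} \<in> K_minus_E n"
      using f that by (simp add: locally_injective_hom_def graph_hom_def)
    then show ?thesis by (rule K_minus_E_div_2)
  qed
  have inj: "inj_on f (nbhd V E v)" if "v \<in> V" for v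
    using f that by (simp add: locally_injective_hom_def)
  have nbhd_V: "u \<in> V" "{u, v} \<in> E" if "u \<in> nbhd V E v" for u v
    using that by (auto simp: nbhd_def)
  have proper: "prism_coloring f (v, i) \<noteq> prism_coloring f (u, j)"
    if "v \<in> V" "u \<in> V" "{(v, i), (u, j)} \<in> box_E V E K2_V K2_E" for v i u j
  proof -
    from that(3) consider "{v, u} \<in> E" | "v = u" "{i, j} = {0, 1}"
      by (auto simp: box_K2_edge_iff[OF sg])
    then show ?thesis
    proof cases
      case 1
      then show ?thesis using hom[OF that(1,2)] by (metis prism_coloring_div_2)
    next
      case 2
      then show ?thesis using mate_neq[of "f v", symmetric] by (auto simp: prism_coloring_def doubleton_eq_iff)
    qed
  qed
  have local_inj: "inj_on (prism_coloring f) (nbhd (box_V V K2_V) (box_E V E K2_V K2_E) (v, i))"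
    if "v \<in> V" "i \<in> {0, 1}" for v i
  proof -
    have "inj_on (prism_coloring f \<circ> (\<lambda>u. (u, i))) (nbhd V E v)"
      using inj[OF \<open>v \<in> V\<close>] by (auto simp: inj_on_def prism_coloring_def dest: arg_cong[of _ _ mate])
    moreover have "prism_coloring f (v, 1 - i) \<noteq> prism_coloring f (u, i)" if "u \<in> nbhd V E v" for u
      using hom[OF \<open>v \<in> V\<close> nbhd_V(1)[OF that]] nbhd_V(2)[OF that]
      by (metis insert_commute prism_coloring_div_2)
    ultimately show ?thesis
      by (auto simp: nbhd_box_K2[OF sg that] inj_on_imageI)
  qed
  show ?thesis
    unfolding two_distance_coloring_def
  proof (intro conjI ballI impI)
    show "prism_coloring f ` box_V V K2_V \<subseteq> {..<2 * n}"
      using range by (auto simp: box_V_def prism_coloring_def)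
  next
    fix x y assume "x \<in> box_V V K2_V" "y \<in> box_V V K2_V" "{x, y} \<in> box_E V E K2_V K2_E"
    then show "prism_coloring f x \<noteq> prism_coloring f y"
      using proper by (cases x; cases y) (simp add: box_V_def)
  next
    fix x assume "x \<in> box_V V K2_V"
    then show "inj_on (prism_coloring f) (nbhd (box_V V K2_V) (box_E V E K2_V K2_E) x)"
      using local_inj by (cases x) (simp add: box_K2_V_iff)
  qed
qed

theorem mainTheorem7:
  fixes V :: "'a set" and E :: "'a set set"
  assumes "simple_graph V E"
    and "two_permutable V E"
  shows "incidence_chromatic (box_E V E K2_V K2_E)
           = max_degree (box_V V K2_V) (box_E V E K2_V K2_E) + 1"
proof -
  let ?W = "box_V V K2_V" and ?F = "box_E V E K2_V K2_E"
  obtain d f where conn: "connected_graph V E" and reg: "regular V E (2 * d)"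
    and f: "locally_injective_hom V E (K_minus_V (d + 1)) (K_minus_E (d + 1)) f"
    using assms(2) unfolding two_permutable_def by blast
  obtain v where v: "v \<in> V" using conn by (auto simp: connected_graph_def)
  have sg_prism: "simple_graph ?W ?F" by (rule simple_graph_box_K2[OF assms(1)])
  have "max_degree ?W ?F = 2 * d + 1"
    using v max_degree_regular[OF _ regular_box_K2[OF assms(1) reg]]
    by (auto simp: box_V_def K2_V_def)
  moreover have "incidence_chromatic ?F = 2 * d + 2"
  proof (rule incidence_chromatic_eqI)
    show "incidence_coloring ?F (incidence_coloring_of (prism_coloring f)) (2 * d + 2)"
      using incidence_coloring_of_two_distance_coloring[OF sg_prism
          two_distance_coloring_prism[OF assms(1) f]] by simp
    fix c k assume col: "incidence_coloring ?F c k"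
    have "(v, 0) \<in> ?W" "(v, 1) \<in> nbhd ?W ?F (v, 0)"
      using v by (auto simp: box_K2_V_iff nbhd_box_K2[OF assms(1)])
    then have "degree ?W ?F (v, 0) + 1 \<le> k"
      using incidence_coloring_degree_bound[OF sg_prism _ _ col] by blast
    then show "2 * d + 2 \<le> k"
      using v reg by (simp add: degree_box_K2[OF assms(1)] regular_def)
  qed
  ultimately show ?thesis by simp
qed

end
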